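(* Let $X$ be a complex Banach space with open unit ball $B$, and suppose $X$ is locally uniformly convex at $x\in S_X$. Then both the cluster value theorem and the polynomial cluster value theorem hold for $A_\infty(B)$ at $x$, i.e. $Cl_B(f,x)=\hat f(M_x)$ and $Cl_B^{\mathcal P}(f,x)=\hat f(M^{\mathcal P}_x)$ for all $f\in A_\infty(B)$.
   Context: $X$ is locally uniformly convex at $x$ if $\|y_n-x\|\to0$ whenever $\|y_n\|\to\|x\|$ and $\|x+y_n\|\to2\|x\|$. $A_\infty(B)$: bounded holomorphic functions on $B$ extending continuously to $\bar B$, sup norm; $M_{A_\infty(B)}$ its spectrum, $\hat f$ the Gelfand transform; $A_u(B)$: uniformly continuous holomorphic functions on $B$; $P(X)$ continuous polynomials, $\tilde P,\tilde g$ Aron–Berner extensions to $X^{**}$. $Cl_B(f,x)=\{\lambda:\exists\text{ net }(x_\alpha)\subset B,\ x_\alpha\to x\text{ weak-star},\ f(x_\alpha)\to\lambda\}$; $M_x=\{\tau:\tau(L)=L(x)\ \forall L\in X^*\}$; $Cl_B^{\mathcal P}(f,x)=\{\lambda:\exists\text{ net }(x_\alpha)\subset B,\ P(x_\alpha)\to\tilde P(x)\ \forall P\in P(X),\ f(x_\alpha)\to\lambda\}$; $M^{\mathcal P}_x=\{\tau:\tau(g)=\tilde g(x)\ \forall g\in A_u(B)\}$. *)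

theory Defs
  imports "HOL-Analysis.Analysis"
begin

text \<open>A complex Banach space: a real Banach space (type class banach) together with a
complex scalar multiplication sc extending the real one, with absolutely homogeneous norm.\<close>
definition complex_banach :: "(complex \<Rightarrow> 'a::banach \<Rightarrow> 'a) \<Rightarrow> bool" where
  "complex_banach sc \<longleftrightarrow>
     (\<forall>r x. sc (complex_of_real r) x = r *\<^sub>R x) \<and>
     (\<forall>a b x. sc (a * b) x = sc a (sc b x)) \<and>
     (\<forall>a b x. sc (a + b) x = sc a x + sc b x) \<and>
     (\<forall>a x y. sc a (x + y) = sc a x + sc a y) \<and>
     (\<forall>a x. norm (sc a x) = cmod a * norm x)"

definition clinear_fun :: "(complex \<Rightarrow> 'a::banach \<Rightarrow> 'a) \<Rightarrow> ('a \<Rightarrow> complex) \<Rightarrow> bool" where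
  "clinear_fun sc L \<longleftrightarrow> (\<forall>x y. L (x + y) = L x + L y) \<and> (\<forall>c x. L (sc c x) = c * L x)"

definition dual_space :: "(complex \<Rightarrow> 'a::banach \<Rightarrow> 'a) \<Rightarrow> ('a \<Rightarrow> complex) set" where
  "dual_space sc = {L. bounded_linear L \<and> clinear_fun sc L}"

definition holo_on :: "(complex \<Rightarrow> 'a::banach \<Rightarrow> 'a) \<Rightarrow> 'a set \<Rightarrow> ('a \<Rightarrow> complex) \<Rightarrow> bool" where
  "holo_on sc U f \<longleftrightarrow> (\<forall>x\<in>U. \<exists>D. (f has_derivative D) (at x) \<and> clinear_fun sc D)"

text \<open>An element is represented by its (unique)
continuous extension to the closed unit ball, normalised to 0 outside the closed ball;
the algebra operations are the pointwise ones.\<close>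
definition A_inf :: "(complex \<Rightarrow> 'a::banach \<Rightarrow> 'a) \<Rightarrow> ('a \<Rightarrow> complex) set" where
  "A_inf sc = {f. holo_on sc (ball 0 1) f \<and> bounded (f ` ball 0 1) \<and>
                  continuous_on (cball 0 1) f \<and> (\<forall>x. 1 < norm x \<longrightarrow> f x = 0)}"

definition spectrum_A_inf :: "(complex \<Rightarrow> 'a::banach \<Rightarrow> 'a) \<Rightarrow> (('a \<Rightarrow> complex) \<Rightarrow> complex) set" where
  "spectrum_A_inf sc = {\<tau>.
     (\<forall>f\<in>A_inf sc. \<forall>g\<in>A_inf sc. \<tau> (\<lambda>x. f x + g x) = \<tau> f + \<tau> g) \<and>
     (\<forall>f\<in>A_inf sc. \<forall>c. \<tau> (\<lambda>x. c * f x) = c * \<tau> f) \<and>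
     (\<forall>f\<in>A_inf sc. \<forall>g\<in>A_inf sc. \<tau> (\<lambda>x. f x * g x) = \<tau> f * \<tau> g) \<and>
     (\<exists>f\<in>A_inf sc. \<tau> f \<noteq> 0)}"

definition gelfand :: "('a \<Rightarrow> complex) \<Rightarrow> (('a \<Rightarrow> complex) \<Rightarrow> complex) \<Rightarrow> complex" where
  "gelfand f \<tau> = \<tau> f"

text \<open>Restriction of a function to the closed unit ball (so it can be fed to a character).\<close>
definition restr_ball :: "('a::real_normed_vector \<Rightarrow> complex) \<Rightarrow> 'a \<Rightarrow> complex" where
  "restr_ball L = (\<lambda>y. if norm y \<le> 1 then L y else 0)"

definition fiber :: "(complex \<Rightarrow> 'a::banach \<Rightarrow> 'a) \<Rightarrow> 'a \<Rightarrow> (('a \<Rightarrow> complex) \<Rightarrow> complex) set" where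
  "fiber sc x = {\<tau>\<in>spectrum_A_inf sc. \<forall>L\<in>dual_space sc. \<tau> (restr_ball L) = L x}"

text \<open>Polynomial fiber M^P_x: characters agreeing at x with the (Aron--Berner extension of)
every g in A_u(B). For x in X (closed ball) the Aron--Berner extension at x is the value
of the continuous extension of g at x.\<close>
definition poly_fiber :: "(complex \<Rightarrow> 'a::banach \<Rightarrow> 'a) \<Rightarrow> 'a \<Rightarrow> (('a \<Rightarrow> complex) \<Rightarrow> complex) set" where
  "poly_fiber sc x = {\<tau>\<in>spectrum_A_inf sc.
      \<forall>g\<in>A_inf sc. uniformly_continuous_on (ball 0 1) g \<longrightarrow> \<tau> g = g x}"

text \<open>Continuous complex k-linear forms, arguments given as nat-indexed families
(only indices < k matter).\<close>
definition cont_multilinear :: "(complex \<Rightarrow> 'a::banach \<Rightarrow> 'a) \<Rightarrow> nat \<Rightarrow> ((nat \<Rightarrow> 'a) \<Rightarrow> complex) \<Rightarrow> bool" where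
  "cont_multilinear sc k A \<longleftrightarrow>
     (\<forall>v w. (\<forall>i<k. v i = w i) \<longrightarrow> A v = A w) \<and>
     (\<forall>i<k. \<forall>v. clinear_fun sc (\<lambda>y. A (v(i := y)))) \<and>
     (\<exists>C. \<forall>v. cmod (A v) \<le> C * (\<Prod>i<k. norm (v i)))"

definition cont_poly :: "(complex \<Rightarrow> 'a::banach \<Rightarrow> 'a) \<Rightarrow> ('a \<Rightarrow> complex) \<Rightarrow> bool" where
  "cont_poly sc P \<longleftrightarrow> (\<exists>n A. (\<forall>k\<le>n. cont_multilinear sc k (A k)) \<and>
                              (\<forall>x. P x = (\<Sum>k\<le>n. A k (\<lambda>_. x))))"

text \<open>Cluster set Cl_B(f,x), x in X: limits of f along nets (here: proper filters) in B
converging weak-star (in X^{**}, i.e. weakly) to x.\<close>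
definition cluster_set :: "(complex \<Rightarrow> 'a::banach \<Rightarrow> 'a) \<Rightarrow> ('a \<Rightarrow> complex) \<Rightarrow> 'a \<Rightarrow> complex set" where
  "cluster_set sc f x = {l. \<exists>F. F \<noteq> bot \<and> eventually (\<lambda>y. y \<in> ball 0 1) F \<and>
       (\<forall>L\<in>dual_space sc. (L \<longlongrightarrow> L x) F) \<and> (f \<longlongrightarrow> l) F}"

text \<open>Polynomial cluster set Cl^P_B(f,x), x in X (Aron--Berner extension of P at x is P x).\<close>
definition poly_cluster_set :: "(complex \<Rightarrow> 'a::banach \<Rightarrow> 'a) \<Rightarrow> ('a \<Rightarrow> complex) \<Rightarrow> 'a \<Rightarrow> complex set" where
  "poly_cluster_set sc f x = {l. \<exists>F. F \<noteq> bot \<and> eventually (\<lambda>y. y \<in> ball 0 1) F \<and>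
       (\<forall>P. cont_poly sc P \<longrightarrow> (P \<longlongrightarrow> P x) F) \<and> (f \<longlongrightarrow> l) F}"

definition loc_unif_convex_at :: "'a::real_normed_vector \<Rightarrow> bool" where
  "loc_unif_convex_at x \<longleftrightarrow> (\<forall>y :: nat \<Rightarrow> 'a.
     (\<lambda>n. norm (y n)) \<longlonglongrightarrow> norm x \<and> (\<lambda>n. norm (x + y n)) \<longlonglongrightarrow> 2 * norm x
       \<longrightarrow> (\<lambda>n. norm (y n - x)) \<longlonglongrightarrow> 0)"

end

theory Submission
  imports Defs
begin

text \<open>Local uniform convexity at x makes x a strong peak point: if L is a norming functional
  at x, then h = (1 + L)/2 has h(x) = 1, \<open>\<bar>h\<bar> \<le> 1\<close> on the ball, and \<open>\<bar>h(y)\<bar>\<close> close to 1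
  forces y close to x in norm. Consequently every character \<tau> with \<tau>(h) = 1 is evaluation at x,
  because \<open>(f - f(x)) h\<^sup>n\<close> is uniformly small for large n. Characters in either fiber satisfy
  \<tau>(h) = 1, and along any net in B that converges weak-star (or polynomially) to x, h tends to 1,
  so the net converges to x in norm and f tends to f(x). Both cluster sets and both images of the
  fibers are therefore {f(x)}.\<close>

text \<open>Hahn--Banach is proved by Zorn's lemma on graphs of norm-dominated linear functionals
  defined on subspaces.\<close>
definition dominated_graph :: "('a::real_normed_vector \<times> real) set \<Rightarrow> bool" where
  "dominated_graph G \<longleftrightarrow>
     (\<forall>u a v b. (u, a) \<in> G \<longrightarrow> (v, b) \<in> G \<longrightarrow> (u + v, a + b) \<in> G) \<and>
     (\<forall>u a r. (u, a) \<in> G \<longrightarrow> (r *\<^sub>R u, r * a) \<in> G) \<and>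
     (\<forall>u a. (u, a) \<in> G \<longrightarrow> a \<le> norm u)"

lemma dominated_graph_unique:
  assumes G: "dominated_graph G" and "(u, a) \<in> G" "(u, b) \<in> G"
  shows "a = b"
proof -
  have "(u + (-1) *\<^sub>R u, a + (-1) * b) \<in> G" "(u + (-1) *\<^sub>R u, b + (-1) * a) \<in> G"
    using assms unfolding dominated_graph_def by blast+
  then have "a - b \<le> 0" "b - a \<le> 0"
    using G unfolding dominated_graph_def by fastforce+
  then show ?thesis by simp
qed

lemma dominated_graph_separating_value:
  assumes M: "dominated_graph M" and "(0, 0) \<in> M"
  obtains c where "\<And>u a. (u, a) \<in> M \<Longrightarrow> a - norm (u - z) \<le> c"
    and "\<And>u a. (u, a) \<in> M \<Longrightarrow> c \<le> norm (u + z) - a"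
proof -
  define Lw where "Lw = {a - norm (u - z) | u a. (u, a) \<in> M}"
  define Rw where "Rw = {norm (v + z) - b | v b. (v, b) \<in> M}"
  have LR: "l \<le> r" if l: "l \<in> Lw" and r: "r \<in> Rw" for l r
  proof -
    obtain u a where ua: "(u, a) \<in> M" "l = a - norm (u - z)"
      using l unfolding Lw_def by blast
    obtain v b where vb: "(v, b) \<in> M" "r = norm (v + z) - b"
      using r unfolding Rw_def by blast
    have "(u + v, a + b) \<in> M" using M ua vb unfolding dominated_graph_def by blast
    then have "a + b \<le> norm ((u - z) + (v + z))"
      using M unfolding dominated_graph_def by simp
    also have "\<dots> \<le> norm (u - z) + norm (v + z)" by (rule norm_triangle_ineq)
    finally show ?thesis using ua vb by simp
  qed
  have "Lw \<noteq> {}" "Rw \<noteq> {}" using \<open>(0, 0) \<in> M\<close> unfolding Lw_def Rw_def by blast+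
  then obtain r0 where "r0 \<in> Rw" by blast
  then have "bdd_above Lw" using LR by (intro bdd_aboveI[of _ r0]) blast
  show thesis
  proof (rule that)
    show "a - norm (u - z) \<le> Sup Lw" if "(u, a) \<in> M" for u a
      using that \<open>bdd_above Lw\<close> by (intro cSup_upper) (auto simp: Lw_def)
    show "Sup Lw \<le> norm (u + z) - a" if "(u, a) \<in> M" for u a
      using that LR \<open>Lw \<noteq> {}\<close> by (intro cSup_least) (auto simp: Rw_def)
  qed
qed

lemma dominated_graph_extension_dominated:
  assumes M: "dominated_graph M" and ua: "(u, a) \<in> M"
    and cL: "\<And>u a. (u, a) \<in> M \<Longrightarrow> a - norm (u - z) \<le> c"
    and cR: "\<And>u a. (u, a) \<in> M \<Longrightarrow> c \<le> norm (u + z) - a"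
  shows "a + t * c \<le> norm (u + t *\<^sub>R z)"
proof (cases t "0::real" rule: linorder_cases)
  case equal then show ?thesis using M ua unfolding dominated_graph_def by auto
next
  case greater
  have "((1/t) *\<^sub>R u, (1/t) * a) \<in> M" using M ua unfolding dominated_graph_def by blast
  then have "t * c \<le> t * (norm ((1/t) *\<^sub>R u + z) - (1/t) * a)" using greater cR by simp
  also have "\<dots> = norm (t *\<^sub>R ((1/t) *\<^sub>R u + z)) - a" using greater by (simp add: right_diff_distrib)
  also have "t *\<^sub>R ((1/t) *\<^sub>R u + z) = u + t *\<^sub>R z" using greater by (simp add: scaleR_add_right)
  finally show ?thesis by simp
next
  case less
  define s where "s = - t"
  have s: "s > 0" using less by (simp add: s_def)
  have "((1/s) *\<^sub>R u, (1/s) * a) \<in> M" using M ua unfolding dominated_graph_def by blast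
  then have "s * ((1/s) * a - norm ((1/s) *\<^sub>R u - z)) \<le> s * c" using s cL by simp
  then have "a - norm (s *\<^sub>R ((1/s) *\<^sub>R u - z)) \<le> s * c" using s by (simp add: right_diff_distrib)
  also have "s *\<^sub>R ((1/s) *\<^sub>R u - z) = u + t *\<^sub>R z" using s by (simp add: s_def scaleR_diff_right)
  finally show ?thesis by (simp add: s_def)
qed

lemma dominated_graph_extend:
  fixes M :: "('a::real_normed_vector \<times> real) set"
  assumes M: "dominated_graph M" and "(0, 0) \<in> M" and z: "\<forall>a. (z, a) \<notin> M"
  shows "\<exists>M'. dominated_graph M' \<and> M \<subset> M'"
proof -
  obtain c where cL: "\<And>u a. (u, a) \<in> M \<Longrightarrow> a - norm (u - z) \<le> c"
    and cR: "\<And>u a. (u, a) \<in> M \<Longrightarrow> c \<le> norm (u + z) - a"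
    using dominated_graph_separating_value[OF M \<open>(0, 0) \<in> M\<close>] by blast
  define M' where "M' = {(u + t *\<^sub>R z, a + t * c) | u a t. (u, a) \<in> M}"
  have "dominated_graph M'"
    unfolding dominated_graph_def
  proof (intro conjI allI impI)
    fix u a v b assume "(u, a) \<in> M'" "(v, b) \<in> M'"
    then obtain u1 a1 t1 u2 a2 t2 where "(u1, a1) \<in> M" "(u2, a2) \<in> M"
      "u = u1 + t1 *\<^sub>R z" "a = a1 + t1 * c" "v = u2 + t2 *\<^sub>R z" "b = a2 + t2 * c"
      unfolding M'_def by blast
    moreover have "(u1 + u2, a1 + a2) \<in> M" using M calculation unfolding dominated_graph_def by blast
    ultimately show "(u + v, a + b) \<in> M'" unfolding M'_def
      by (intro CollectI exI[of _ "u1 + u2"] exI[of _ "a1 + a2"] exI[of _ "t1 + t2"])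
         (simp add: algebra_simps scaleR_add_left)
  next
    fix u a r assume "(u, a) \<in> M'"
    then obtain u1 a1 t1 where "(u1, a1) \<in> M" "u = u1 + t1 *\<^sub>R z" "a = a1 + t1 * c"
      unfolding M'_def by blast
    moreover have "(r *\<^sub>R u1, r * a1) \<in> M" using M calculation unfolding dominated_graph_def by blast
    ultimately show "(r *\<^sub>R u, r * a) \<in> M'" unfolding M'_def
      by (intro CollectI exI[of _ "r *\<^sub>R u1"] exI[of _ "r * a1"] exI[of _ "r * t1"])
         (simp add: algebra_simps scaleR_add_right)
  next
    fix u a assume "(u, a) \<in> M'"
    then show "a \<le> norm u"
      using dominated_graph_extension_dominated[OF M _ cL cR] unfolding M'_def by blast
  qed
  moreover have "M \<subseteq> M'" unfolding M'_def by (force intro: exI[of _ 0])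
  moreover have "(z, c) \<in> M'" unfolding M'_def using \<open>(0, 0) \<in> M\<close>
    by (intro CollectI exI[of _ 0] exI[of _ "0::real"] exI[of _ 1]) simp
  ultimately show ?thesis using z by blast
qed

lemma dominated_graph_Union_chain:
  assumes "\<forall>G\<in>C. dominated_graph G" "\<forall>G\<in>C. \<forall>H\<in>C. G \<subseteq> H \<or> H \<subseteq> G"
  shows "dominated_graph (\<Union>C)"
  unfolding dominated_graph_def
proof (intro conjI allI impI)
  fix u a v b assume "(u, a) \<in> \<Union>C" "(v, b) \<in> \<Union>C"
  then obtain G H where "G \<in> C" "H \<in> C" "(u, a) \<in> G" "(v, b) \<in> H" by blast
  moreover have "G \<subseteq> H \<or> H \<subseteq> G" using assms(2) \<open>G \<in> C\<close> \<open>H \<in> C\<close> by blast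
  ultimately obtain K where K: "K \<in> C" "(u, a) \<in> K" "(v, b) \<in> K" by (metis subsetD)
  have "dominated_graph K" using assms(1) K(1) by blast
  then have "(u + v, a + b) \<in> K" using K(2,3) unfolding dominated_graph_def by blast
  then show "(u + v, a + b) \<in> \<Union>C" using K(1) by blast
next
  fix u a r assume "(u, a) \<in> \<Union>C"
  then obtain K where K: "K \<in> C" "(u, a) \<in> K" by blast
  have "dominated_graph K" using assms(1) K(1) by blast
  then have "(r *\<^sub>R u, r * a) \<in> K" using K(2) unfolding dominated_graph_def by blast
  then show "(r *\<^sub>R u, r * a) \<in> \<Union>C" using K(1) by blast
next
  fix u a assume "(u, a) \<in> \<Union>C"
  then obtain K where K: "K \<in> C" "(u, a) \<in> K" by blast
  have "dominated_graph K" using assms(1) K(1) by blast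
  then show "a \<le> norm u" using K(2) unfolding dominated_graph_def by blast
qed

lemma exists_total_dominated_graph:
  assumes G0: "dominated_graph G0" and "(0, 0) \<in> G0"
  shows "\<exists>M. dominated_graph M \<and> G0 \<subseteq> M \<and> (\<forall>z. \<exists>a. (z, a) \<in> M)"
proof -
  define A where "A = {G. dominated_graph G \<and> G0 \<subseteq> G}"
  have "\<exists>U\<in>A. \<forall>X\<in>C. X \<subseteq> U" if "C \<in> chains A" for C
  proof (cases "C = {}")
    case True then show ?thesis using G0 unfolding A_def by blast
  next
    case False
    with that have "dominated_graph (\<Union>C)" "G0 \<subseteq> \<Union>C"
      using dominated_graph_Union_chain
      unfolding chains_def chain_subset_def A_def by blast+
    then show ?thesis unfolding A_def by blast
  qed
  from Zorn_Lemma2[OF ballI[OF this]] obtain M where M: "dominated_graph M" "G0 \<subseteq> M"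
    and max: "\<forall>X\<in>A. M \<subseteq> X \<longrightarrow> X = M" unfolding A_def by blast
  have "\<exists>a. (z, a) \<in> M" for z
    using dominated_graph_extend[OF M(1), of z] max M(2) \<open>(0, 0) \<in> G0\<close> unfolding A_def by blast
  then show ?thesis using M by blast
qed

lemma total_dominated_graph_functional:
  assumes M: "dominated_graph M" and total: "\<And>z. \<exists>a. (z, a) \<in> M"
  obtains l where "linear l" "\<And>z a. (z, a) \<in> M \<longleftrightarrow> l z = a" "\<And>y. \<bar>l y\<bar> \<le> norm y"
proof
  define l where "l z = (THE a. (z, a) \<in> M)" for z
  show lM: "(z, a) \<in> M \<longleftrightarrow> l z = a" for z a
  proof -
    obtain b where "(z, b) \<in> M" using total by blast
    then have "l z = b" unfolding l_def
      using dominated_graph_unique[OF M] by (intro the_equality) blast+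
    then show ?thesis using \<open>(z, b) \<in> M\<close> dominated_graph_unique[OF M] by blast
  qed
  show "linear l"
  proof
    fix u v
    have "(u + v, l u + l v) \<in> M" using M lM unfolding dominated_graph_def by blast
    then show "l (u + v) = l u + l v" using lM by blast
  next
    fix r u
    have "(r *\<^sub>R u, r * l u) \<in> M" using M lM unfolding dominated_graph_def by blast
    then show "l (r *\<^sub>R u) = r *\<^sub>R l u" using lM by simp
  qed
  show "\<bar>l y\<bar> \<le> norm y" for y
  proof -
    have "l y \<le> norm y" "l (- y) \<le> norm (- y)"
      using M lM unfolding dominated_graph_def by blast+
    then show ?thesis using linear_neg[OF \<open>linear l\<close>, of y] by simp
  qed
qed

lemma exists_norming_functional:
  fixes x :: "'a::real_normed_vector"
  assumes "norm x = 1"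
  shows "\<exists>l. linear l \<and> l x = 1 \<and> (\<forall>y. \<bar>l y\<bar> \<le> norm y)"
proof -
  define G0 where "G0 = {(r *\<^sub>R x, r) | r. True}"
  have "dominated_graph G0" unfolding dominated_graph_def G0_def using assms
    by (auto simp: scaleR_add_left)
  moreover have "(0, 0) \<in> G0" "(x, 1) \<in> G0" unfolding G0_def by force+
  ultimately obtain M where M: "dominated_graph M" "(x, 1) \<in> M" "\<And>z. \<exists>a. (z, a) \<in> M"
    using exists_total_dominated_graph by blast
  then obtain l where "linear l" "(x, 1) \<in> M \<longleftrightarrow> l x = 1" "\<And>y. \<bar>l y\<bar> \<le> norm y"
    using total_dominated_graph_functional by metis
  then show ?thesis using M(2) by blast
qed

definition complexification :: "(complex \<Rightarrow> 'a \<Rightarrow> 'a) \<Rightarrow> ('a \<Rightarrow> real) \<Rightarrow> 'a \<Rightarrow> complex" where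
  "complexification sc l y = complex_of_real (l y) - \<i> * complex_of_real (l (sc \<i> y))"

context
  fixes sc :: "complex \<Rightarrow> 'a::banach \<Rightarrow> 'a"
  assumes sc: "complex_banach sc"
begin

lemma sc_of_real: "sc (complex_of_real r) y = r *\<^sub>R y"
  and sc_mult: "sc (a * b) y = sc a (sc b y)"
  and sc_add_left: "sc (a + b) y = sc a y + sc b y"
  and sc_add_right: "sc a (y + z) = sc a y + sc a z"
  and norm_sc: "norm (sc a y) = cmod a * norm y"
  using sc unfolding complex_banach_def by blast+

lemma sc_scaleR: "sc a (r *\<^sub>R y) = r *\<^sub>R sc a y"
  by (metis sc_of_real sc_mult mult.commute)

lemma sc_Re_Im: "sc c y = Re c *\<^sub>R y + Im c *\<^sub>R sc \<i> y"
proof -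
  have "c = of_real (Re c) + \<i> * of_real (Im c)" by (simp add: complex_eq_iff)
  then have "sc c y = sc (of_real (Re c)) y + sc \<i> (sc (of_real (Im c)) y)"
    by (metis sc_add_left sc_mult)
  then show ?thesis by (simp add: sc_of_real sc_scaleR)
qed

lemma sc_ii_ii: "sc \<i> (sc \<i> y) = - y"
  using sc_of_real[of "-1" y] by (simp add: sc_mult[symmetric])

lemma complexification_add:
  "linear l \<Longrightarrow> complexification sc l (u + v) = complexification sc l u + complexification sc l v"
  unfolding complexification_def by (simp add: sc_add_right linear_add algebra_simps)

lemma complexification_sc:
  assumes l: "linear l"
  shows "complexification sc l (sc c y) = c * complexification sc l y"
proof -
  have "l (sc c y) = Re c * l y + Im c * l (sc \<i> y)"
    unfolding sc_Re_Im[of c y] by (simp add: linear_add[OF l] linear_scale[OF l])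
  moreover have "l (sc \<i> (sc c y)) = Re c * l (sc \<i> y) - Im c * l y"
    unfolding sc_Re_Im[of c y]
    by (simp add: sc_add_right sc_scaleR sc_ii_ii linear_diff[OF l] linear_scale[OF l])
  ultimately show ?thesis unfolding complexification_def by (simp add: complex_eq_iff algebra_simps)
qed

lemma norm_complexification_le:
  assumes l: "linear l" and l_le: "\<And>y. \<bar>l y\<bar> \<le> norm y"
  shows "cmod (complexification sc l y) \<le> norm y"
proof (cases "complexification sc l y = 0")
  case False
  define L where "L = complexification sc l"
  \<comment> \<open>Rotate y so that L takes a nonnegative real value, where it agrees with l.\<close>
  define c where "c = cnj (L y) / complex_of_real (cmod (L y))"
  have "L (sc c y) = cnj (L y) * L y / complex_of_real (cmod (L y))"
    unfolding L_def complexification_sc[OF l] c_def by simp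
  also have "cnj (L y) * L y = (complex_of_real (cmod (L y)))\<^sup>2"
    using complex_norm_square[of "L y"] by (simp add: mult.commute)
  also have "\<dots> / complex_of_real (cmod (L y)) = complex_of_real (cmod (L y))"
    using False by (simp add: L_def power2_eq_square)
  finally have "cmod (L y) = l (sc c y)" unfolding L_def complexification_def by (simp add: complex_eq_iff)
  also have "\<dots> \<le> norm (sc c y)" using l_le abs_le_D1 by blast
  also have "\<dots> = norm y" using False by (simp add: L_def norm_sc c_def norm_divide)
  finally show ?thesis unfolding L_def .
qed simp

lemma exists_norming_dual:
  assumes "norm x = 1"
  shows "\<exists>L\<in>dual_space sc. L x = 1 \<and> (\<forall>y. cmod (L y) \<le> norm y)"
proof -
  obtain l where l: "linear l" and lx: "l x = 1" and l_le: "\<And>y. \<bar>l y\<bar> \<le> norm y"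
    using exists_norming_functional[OF assms] by blast
  define L where "L = complexification sc l"
  have L_le: "cmod (L y) \<le> norm y" for y
    unfolding L_def by (rule norm_complexification_le[OF l l_le])
  have "L x = 1"
  proof -
    have "Re (L x) = 1" unfolding L_def complexification_def using lx by simp
    moreover have "(Re (L x))\<^sup>2 + (Im (L x))\<^sup>2 \<le> 1"
      using L_le[of x] assms by (metis cmod_power2 norm_ge_zero power_le_one)
    ultimately show ?thesis by (simp add: complex_eq_iff)
  qed
  moreover have "bounded_linear L"
  proof (rule bounded_linear_intro[where K = 1])
    show "L (r *\<^sub>R u) = r *\<^sub>R L u" for r u
      using complexification_sc[OF l, of "of_real r" u] by (simp add: L_def sc_of_real scaleR_conv_of_real)
  qed (simp_all add: L_def complexification_add[OF l] L_le[unfolded L_def])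
  moreover have "clinear_fun sc L"
    unfolding clinear_fun_def L_def using complexification_add[OF l] complexification_sc[OF l] by blast
  ultimately show ?thesis using L_le unfolding dual_space_def by blast
qed

end

lemma holo_on_const: "holo_on sc U (\<lambda>y. c)"
  unfolding holo_on_def clinear_fun_def by (auto intro: has_derivative_const)

lemma holo_on_add:
  assumes "holo_on sc U f" "holo_on sc U g"
  shows "holo_on sc U (\<lambda>y. f y + g y)"
  unfolding holo_on_def
proof
  fix y assume "y \<in> U"
  then obtain Df Dg where "(f has_derivative Df) (at y)" "clinear_fun sc Df"
    "(g has_derivative Dg) (at y)" "clinear_fun sc Dg"
    using assms unfolding holo_on_def by blast
  then show "\<exists>D. ((\<lambda>y. f y + g y) has_derivative D) (at y) \<and> clinear_fun sc D"
    by (intro exI[of _ "\<lambda>h. Df h + Dg h"] conjI has_derivative_add)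
       (auto simp: clinear_fun_def algebra_simps)
qed

lemma holo_on_mult:
  assumes "holo_on sc U f" "holo_on sc U g"
  shows "holo_on sc U (\<lambda>y. f y * g y)"
  unfolding holo_on_def
proof
  fix y assume "y \<in> U"
  then obtain Df Dg where "(f has_derivative Df) (at y)" "clinear_fun sc Df"
    "(g has_derivative Dg) (at y)" "clinear_fun sc Dg"
    using assms unfolding holo_on_def by blast
  then show "\<exists>D. ((\<lambda>y. f y * g y) has_derivative D) (at y) \<and> clinear_fun sc D"
    by (intro exI[of _ "\<lambda>h. f y * Dg h + Df h * g y"] conjI has_derivative_mult)
       (auto simp: clinear_fun_def algebra_simps)
qed

lemma holo_on_inverse:
  assumes "holo_on sc U f" "\<And>y. y \<in> U \<Longrightarrow> f y \<noteq> 0"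
  shows "holo_on sc U (\<lambda>y. inverse (f y))"
  unfolding holo_on_def
proof
  fix y assume "y \<in> U"
  then obtain D where "(f has_derivative D) (at y)" "clinear_fun sc D"
    using assms(1) unfolding holo_on_def by blast
  then show "\<exists>D. ((\<lambda>y. inverse (f y)) has_derivative D) (at y) \<and> clinear_fun sc D"
    using assms(2)[OF \<open>y \<in> U\<close>] Deriv.has_derivative_inverse[of f y D UNIV]
    by (intro exI[of _ "\<lambda>h. - (inverse (f y) * D h * inverse (f y))"] conjI)
       (auto simp: clinear_fun_def algebra_simps)
qed

lemma holo_on_cong:
  assumes "holo_on sc U f" "open U" "\<And>y. y \<in> U \<Longrightarrow> f y = g y"
  shows "holo_on sc U g"
  using assms has_derivative_transform_within_open[of f _ _ UNIV U g]
  unfolding holo_on_def by (metis UNIV_I)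

lemma holo_on_dual: "L \<in> dual_space sc \<Longrightarrow> holo_on sc U L"
  unfolding holo_on_def dual_space_def
  using bounded_linear.has_derivative[OF _ has_derivative_ident] by fastforce

lemma bounded_mult_comp:
  fixes f g :: "'b \<Rightarrow> 'c::real_normed_algebra"
  assumes "bounded (f ` S)" "bounded (g ` S)"
  shows "bounded ((\<lambda>x. f x * g x) ` S)"
proof -
  obtain B C where "B > 0" "C > 0" "\<And>y. y \<in> S \<Longrightarrow> norm (f y) \<le> B \<and> norm (g y) \<le> C"
    using assms unfolding bounded_pos by (auto simp: ball_simps)
  then have "norm (f y * g y) \<le> B * C" if "y \<in> S" for y
    using that by (metis norm_ge_zero norm_mult_ineq mult_mono order_trans)
  then show ?thesis unfolding bounded_iff by blast
qed

lemma A_inf_zero: "f \<in> A_inf sc \<Longrightarrow> 1 < norm y \<Longrightarrow> f y = 0"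
  unfolding A_inf_def by blast

lemma A_inf_continuous_on: "f \<in> A_inf sc \<Longrightarrow> continuous_on (cball 0 1) f"
  unfolding A_inf_def by blast

lemma A_inf_bounded:
  assumes "f \<in> A_inf sc"
  obtains M where "\<And>y. cmod (f y) \<le> M"
proof -
  obtain M where M: "\<And>y. y \<in> ball 0 1 \<Longrightarrow> cmod (f y) \<le> M" "M \<ge> 0"
    using assms unfolding A_inf_def bounded_pos by (force simp: ball_simps)
  have "f ` closure (ball 0 1) \<subseteq> cball 0 M"
    using A_inf_continuous_on[OF assms] M(1) by (intro image_closure_subset) auto
  then have "cmod (f y) \<le> M" for y
    using A_inf_zero[OF assms, of y] M(2) by (cases "norm y \<le> 1") (auto simp: subset_iff)
  then show thesis by (rule that)
qed

lemma restr_ball_in_A_inf: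
  assumes "holo_on sc (ball 0 1) f" "bounded (f ` ball 0 1)" "continuous_on (cball 0 1) f"
  shows "restr_ball f \<in> A_inf sc"
proof -
  have eq: "restr_ball f y = f y" if "y \<in> cball 0 1" for y
    using that unfolding restr_ball_def by simp
  have "restr_ball f ` ball 0 1 = f ` ball 0 1" using eq by (intro image_cong) auto
  moreover have "holo_on sc (ball 0 1) (restr_ball f)"
    using eq by (intro holo_on_cong[OF assms(1) open_ball]) auto
  moreover have "continuous_on (cball 0 1) (restr_ball f)"
    by (rule continuous_on_eq[OF assms(3)]) (simp add: eq)
  moreover have "restr_ball f y = 0" if "1 < norm y" for y
    using that unfolding restr_ball_def by simp
  ultimately show ?thesis using assms(2) unfolding A_inf_def by simp
qed

lemma restr_ball_const_in_A_inf: "restr_ball (\<lambda>_. c) \<in> A_inf sc"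
  by (intro restr_ball_in_A_inf holo_on_const continuous_on_const) (auto simp: bounded_iff)

lemma restr_ball_dual_in_A_inf: "L \<in> dual_space sc \<Longrightarrow> restr_ball L \<in> A_inf sc"
  by (intro restr_ball_in_A_inf holo_on_dual)
     (auto simp: dual_space_def bounded_linear_image linear_continuous_on)

lemma A_inf_add: "f \<in> A_inf sc \<Longrightarrow> g \<in> A_inf sc \<Longrightarrow> (\<lambda>y. f y + g y) \<in> A_inf sc"
  unfolding A_inf_def
  by (auto intro: holo_on_add bounded_plus_comp continuous_on_add)

lemma A_inf_mult: "f \<in> A_inf sc \<Longrightarrow> g \<in> A_inf sc \<Longrightarrow> (\<lambda>y. f y * g y) \<in> A_inf sc"
  unfolding A_inf_def
  by (auto intro: holo_on_mult bounded_mult_comp continuous_on_mult)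

lemma A_inf_cmult:
  assumes "f \<in> A_inf sc"
  shows "(\<lambda>y. c * f y) \<in> A_inf sc"
proof -
  have "(\<lambda>y. restr_ball (\<lambda>_. c) y * f y) = (\<lambda>y. c * f y)"
    using A_inf_zero[OF assms] by (auto simp: restr_ball_def fun_eq_iff)
  then show ?thesis using A_inf_mult[OF restr_ball_const_in_A_inf[of c] assms] by simp
qed

lemma spectrum_add:
  "\<tau> \<in> spectrum_A_inf sc \<Longrightarrow> f \<in> A_inf sc \<Longrightarrow> g \<in> A_inf sc \<Longrightarrow> \<tau> (\<lambda>y. f y + g y) = \<tau> f + \<tau> g"
  and spectrum_cmult:
  "\<tau> \<in> spectrum_A_inf sc \<Longrightarrow> f \<in> A_inf sc \<Longrightarrow> \<tau> (\<lambda>y. c * f y) = c * \<tau> f"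
  and spectrum_mult:
  "\<tau> \<in> spectrum_A_inf sc \<Longrightarrow> f \<in> A_inf sc \<Longrightarrow> g \<in> A_inf sc \<Longrightarrow> \<tau> (\<lambda>y. f y * g y) = \<tau> f * \<tau> g"
  unfolding spectrum_A_inf_def by blast+

lemma spectrum_unit:
  assumes \<tau>: "\<tau> \<in> spectrum_A_inf sc"
  shows "\<tau> (restr_ball (\<lambda>_. 1)) = 1"
proof -
  obtain f where f: "f \<in> A_inf sc" "\<tau> f \<noteq> 0" using \<tau> unfolding spectrum_A_inf_def by blast
  have "(\<lambda>y. f y * restr_ball (\<lambda>_. 1) y) = f"
    using A_inf_zero[OF f(1)] by (auto simp: restr_ball_def fun_eq_iff)
  then have "\<tau> f = \<tau> f * \<tau> (restr_ball (\<lambda>_. 1))"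
    using spectrum_mult[OF \<tau> f(1) restr_ball_const_in_A_inf[of 1]] by simp
  then show ?thesis using f(2) by simp
qed

lemma spectrum_minus_const:
  assumes \<tau>: "\<tau> \<in> spectrum_A_inf sc" and f: "f \<in> A_inf sc"
  shows "(\<lambda>y. f y - c * restr_ball (\<lambda>_. 1) y) \<in> A_inf sc"
    and "\<tau> (\<lambda>y. f y - c * restr_ball (\<lambda>_. 1) y) = \<tau> f - c"
proof -
  have eq: "(\<lambda>y. f y - c * restr_ball (\<lambda>_. 1) y) = (\<lambda>y. f y + (- c) * restr_ball (\<lambda>_. 1) y)"
    by simp
  have one: "restr_ball (\<lambda>_. 1) \<in> A_inf sc" by (rule restr_ball_const_in_A_inf)
  show "(\<lambda>y. f y - c * restr_ball (\<lambda>_. 1) y) \<in> A_inf sc"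
    unfolding eq by (intro A_inf_add f A_inf_cmult one)
  show "\<tau> (\<lambda>y. f y - c * restr_ball (\<lambda>_. 1) y) = \<tau> f - c"
    unfolding eq spectrum_add[OF \<tau> f A_inf_cmult[OF one]] spectrum_cmult[OF \<tau> one]
    by (simp add: spectrum_unit[OF \<tau>])
qed

lemma spectrum_power:
  assumes \<tau>: "\<tau> \<in> spectrum_A_inf sc" and h: "h \<in> A_inf sc"
  shows "(\<lambda>y. h y ^ Suc n) \<in> A_inf sc \<and> \<tau> (\<lambda>y. h y ^ Suc n) = \<tau> h ^ Suc n"
proof (induction n)
  case (Suc n)
  have "(\<lambda>y. h y ^ Suc (Suc n)) = (\<lambda>y. h y * h y ^ Suc n)" by simp
  then show ?case using Suc A_inf_mult[OF h] spectrum_mult[OF \<tau> h] by simp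
qed (use h in simp)

text \<open>If \<open>\<bar>\<tau> u\<bar>\<close> exceeded the bound, \<open>u - \<tau> u\<close> would be invertible in
  \<open>A_inf\<close> but lie in the kernel of \<open>\<tau>\<close>.\<close>
lemma spectrum_norm_le:
  assumes \<tau>: "\<tau> \<in> spectrum_A_inf sc" and u: "u \<in> A_inf sc" and S: "\<And>y. cmod (u y) \<le> S"
  shows "cmod (\<tau> u) \<le> S"
proof (rule ccontr)
  assume "\<not> ?thesis"
  then have gap: "0 < cmod (\<tau> u) - S" by simp
  define w where "w = (\<lambda>y. u y - \<tau> u * restr_ball (\<lambda>_. 1) y)"
  have w: "w \<in> A_inf sc" "\<tau> w = 0" using spectrum_minus_const[OF \<tau> u] unfolding w_def by simp_all
  have dist: "cmod (\<tau> u) - S \<le> cmod (u y - \<tau> u)" for y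
    using S[of y] norm_triangle_ineq2[of "\<tau> u" "u y"] by (simp add: norm_minus_commute)
  then have nz: "u y - \<tau> u \<noteq> 0" for y using gap by (metis norm_zero not_le)
  define v where "v = restr_ball (\<lambda>y. inverse (u y - \<tau> u))"
  have v: "v \<in> A_inf sc" unfolding v_def
  proof (rule restr_ball_in_A_inf)
    have "holo_on sc (ball 0 1) (\<lambda>y. u y + (- \<tau> u))"
      using u holo_on_add[OF _ holo_on_const] unfolding A_inf_def by blast
    then show "holo_on sc (ball 0 1) (\<lambda>y. inverse (u y - \<tau> u))"
      using holo_on_inverse[of sc "ball 0 1" "\<lambda>y. u y + (- \<tau> u)"] nz by simp
    have "cmod (inverse (u y - \<tau> u)) \<le> inverse (cmod (\<tau> u) - S)" for y
      using dist[of y] gap by (simp add: norm_inverse le_imp_inverse_le)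
    then show "bounded ((\<lambda>y. inverse (u y - \<tau> u)) ` ball 0 1)"
      unfolding bounded_iff by blast
    show "continuous_on (cball 0 1) (\<lambda>y. inverse (u y - \<tau> u))"
      using A_inf_continuous_on[OF u] nz by (intro continuous_intros) auto
  qed
  have "(\<lambda>y. w y * v y) = restr_ball (\<lambda>_. 1)"
    using nz A_inf_zero[OF u] by (auto simp: fun_eq_iff w_def v_def restr_ball_def)
  then have "\<tau> (restr_ball (\<lambda>_. 1)) = \<tau> w * \<tau> v" using spectrum_mult[OF \<tau> w(1) v] by simp
  then show False using w(2) spectrum_unit[OF \<tau>] by simp
qed

definition strong_peak_at :: "('a::real_normed_vector \<Rightarrow> complex) \<Rightarrow> 'a \<Rightarrow> bool" where
  "strong_peak_at h x \<longleftrightarrow> h x = 1 \<and> (\<forall>y. cmod (h y) \<le> 1) \<and>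
     (\<forall>\<delta>>0. \<exists>\<eta>>0. \<forall>y. norm y \<le> 1 \<longrightarrow> 1 - \<eta> < cmod (h y) \<longrightarrow> norm (y - x) < \<delta>)"

lemma strong_peak_tendsto:
  assumes h: "strong_peak_at h x" and F: "eventually (\<lambda>y. norm y \<le> 1) F" and lim: "(h \<longlongrightarrow> 1) F"
  shows "((\<lambda>y. y) \<longlongrightarrow> x) F"
  unfolding tendsto_iff
proof (intro allI impI)
  fix \<delta> :: real assume "\<delta> > 0"
  then obtain \<eta> where "\<eta> > 0" and \<eta>: "\<And>y. norm y \<le> 1 \<Longrightarrow> 1 - \<eta> < cmod (h y) \<Longrightarrow> norm (y - x) < \<delta>"
    using h unfolding strong_peak_at_def by blast
  have "((\<lambda>y. cmod (h y)) \<longlongrightarrow> 1) F" using tendsto_norm[OF lim] by simp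
  from order_tendstoD(1)[OF this, of "1 - \<eta>"] \<open>\<eta> > 0\<close>
  have "eventually (\<lambda>y. 1 - \<eta> < cmod (h y)) F" by simp
  with F show "eventually (\<lambda>y. dist y x < \<delta>) F"
    by eventually_elim (simp add: \<eta> dist_norm)
qed

text \<open>Far from x the powers of h are uniformly small, near x the function g is.\<close>
lemma strong_peak_power_small:
  assumes h: "strong_peak_at h x" and g: "g \<in> A_inf sc" "g x = 0" and x: "norm x \<le> 1" and "e > 0"
  shows "\<exists>n. \<forall>y. cmod (g y * h y ^ Suc n) \<le> e"
proof -
  obtain M where M: "\<And>y. cmod (g y) \<le> M" using A_inf_bounded[OF g(1)] by blast
  obtain d where "d > 0" and d: "\<And>y. norm y \<le> 1 \<Longrightarrow> dist y x < d \<Longrightarrow> cmod (g y) < e"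
    using A_inf_continuous_on[OF g(1)] \<open>e > 0\<close> x g(2) unfolding continuous_on_iff by fastforce
  obtain \<eta> where "\<eta> > 0" and \<eta>: "\<And>y. norm y \<le> 1 \<Longrightarrow> 1 - \<eta> < cmod (h y) \<Longrightarrow> norm (y - x) < d"
    using h \<open>d > 0\<close> unfolding strong_peak_at_def by blast
  define q where "q = 1 - min \<eta> 1"
  have q: "0 \<le> q" "q < 1" using \<open>\<eta> > 0\<close> by (auto simp: q_def)
  have "(\<lambda>n. M * q ^ Suc n) \<longlonglongrightarrow> M * 0"
    using q by (intro tendsto_mult tendsto_const LIMSEQ_power_zero[THEN LIMSEQ_Suc]) simp
  from order_tendstoD(2)[OF this] \<open>e > 0\<close> obtain n where n: "M * q ^ Suc n < e"
    unfolding eventually_sequentially by auto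
  have h_le: "cmod (h y) \<le> 1" for y using h unfolding strong_peak_at_def by blast
  have "cmod (g y * h y ^ Suc n) \<le> e" for y
  proof (cases "norm y \<le> 1 \<and> 1 - \<eta> < cmod (h y)")
    case True
    then have "cmod (g y) \<le> e" using d \<eta> by (simp add: dist_norm less_imp_le)
    moreover have "cmod (h y) ^ Suc n \<le> 1" using h_le by (intro power_le_one) auto
    ultimately have "cmod (g y) * cmod (h y) ^ Suc n \<le> e * 1"
      using \<open>e > 0\<close> by (intro mult_mono) auto
    then show ?thesis by (simp add: norm_mult norm_power)
  next
    case False
    then consider "cmod (h y) \<le> q" | "g y = 0"
      using A_inf_zero[OF g(1), of y] h_le by (force simp: q_def)
    then show ?thesis
    proof cases
      case 1
      then have "cmod (h y) ^ Suc n \<le> q ^ Suc n" by (intro power_mono) auto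
      then have "cmod (g y) * cmod (h y) ^ Suc n \<le> M * q ^ Suc n"
        using M[of y] q by (intro mult_mono) (auto intro: order_trans[OF norm_ge_zero])
      then show ?thesis using n by (simp add: norm_mult norm_power)
    qed (use \<open>e > 0\<close> in simp)
  qed
  then show ?thesis by blast
qed

lemma strong_peak_character:
  assumes h: "strong_peak_at h x" "h \<in> A_inf sc" and x: "norm x \<le> 1"
    and \<tau>: "\<tau> \<in> spectrum_A_inf sc" "\<tau> h = 1" and f: "f \<in> A_inf sc"
  shows "\<tau> f = f x"
proof -
  define g where "g = (\<lambda>y. f y - f x * restr_ball (\<lambda>_. 1) y)"
  have g: "g \<in> A_inf sc" "\<tau> g = \<tau> f - f x" "g x = 0"
    using spectrum_minus_const[OF \<tau>(1) f] x unfolding g_def by (simp_all add: restr_ball_def)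
  have "cmod (\<tau> g) \<le> 0 + e" if "e > 0" for e
  proof -
    obtain n where small: "\<And>y. cmod (g y * h y ^ Suc n) \<le> e"
      using strong_peak_power_small[OF h(1) g(1,3) x \<open>e > 0\<close>] by blast
    have hn: "(\<lambda>y. h y ^ Suc n) \<in> A_inf sc" "\<tau> (\<lambda>y. h y ^ Suc n) = 1"
      using spectrum_power[OF \<tau>(1) h(2)] \<tau>(2) by auto
    have "cmod (\<tau> (\<lambda>y. g y * h y ^ Suc n)) \<le> e"
      using spectrum_norm_le[OF \<tau>(1) A_inf_mult[OF g(1) hn(1)] small] .
    then show ?thesis using spectrum_mult[OF \<tau>(1) g(1) hn(1)] hn(2) by simp
  qed
  then have "\<tau> g = 0" using field_le_epsilon[of "cmod (\<tau> g)" 0] by simp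
  then show ?thesis using g(2) by simp
qed

text \<open>Otherwise there are \<open>y\<^sub>n\<close> in the closed ball, away from x, with
  \<open>\<bar>1 + L y\<^sub>n\<bar> \<rightarrow> 2\<close>; then \<open>\<parallel>y\<^sub>n\<parallel> \<rightarrow> 1\<close> and \<open>\<parallel>x + y\<^sub>n\<parallel> \<rightarrow> 2\<close>, so local uniform convexity forces \<open>y\<^sub>n \<rightarrow> x\<close>.\<close>
lemma loc_unif_convex_localizes:
  fixes x :: "'a::real_normed_vector"
  assumes x: "norm x = 1" "loc_unif_convex_at x"
    and L_add: "\<And>u v. L (u + v) = L u + L v" and "L x = 1" and L_le: "\<And>y. cmod (L y) \<le> norm y"
    and "\<delta> > 0"
  shows "\<exists>\<eta>>0. \<forall>y. norm y \<le> 1 \<longrightarrow> 2 - \<eta> < cmod (1 + L y) \<longrightarrow> norm (y - x) < \<delta>"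
proof (rule ccontr)
  assume "\<not> ?thesis"
  then have "\<forall>n. \<exists>y. norm y \<le> 1 \<and> 2 - 1 / real (Suc n) < cmod (1 + L y) \<and> \<delta> \<le> norm (y - x)"
    unfolding not_ex not_less by (metis of_nat_0_less_iff zero_less_Suc zero_less_divide_1_iff not_le)
  from choice[OF this] obtain y
    where "\<forall>n. norm (y n) \<le> 1 \<and> 2 - 1 / real (Suc n) < cmod (1 + L (y n)) \<and> \<delta> \<le> norm (y n - x)"
    by blast
  then have y: "\<And>n. norm (y n) \<le> 1" "\<And>n. 2 - 1 / real (Suc n) < cmod (1 + L (y n))"
    "\<And>n. \<delta> \<le> norm (y n - x)" by auto
  have lim: "(\<lambda>n. c - 1 / real (Suc n)) \<longlonglongrightarrow> c" for c :: real
    using tendsto_diff[OF tendsto_const LIMSEQ_Suc[OF lim_inverse_n']] by (simp add: divide_inverse)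
  have "2 - 1 / real (Suc n) \<le> norm (x + y n) \<and> norm (x + y n) \<le> 2" for n
    using L_le[of "x + y n"] y(1,2)[of n] x(1) norm_triangle_ineq[of x "y n"]
    by (simp add: L_add \<open>L x = 1\<close>)
  then have "(\<lambda>n. norm (x + y n)) \<longlonglongrightarrow> 2"
    by (intro tendsto_sandwich[OF _ _ lim tendsto_const] always_eventually) auto
  moreover have "1 - 1 / real (Suc n) \<le> norm (y n) \<and> norm (y n) \<le> 1" for n
    using L_le[of "y n"] norm_triangle_ineq[of 1 "L (y n)"] y(1,2)[of n] by simp
  then have "(\<lambda>n. norm (y n)) \<longlonglongrightarrow> 1"
    by (intro tendsto_sandwich[OF _ _ lim tendsto_const] always_eventually) auto
  ultimately have "(\<lambda>n. norm (y n - x)) \<longlonglongrightarrow> 0"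
    using x unfolding loc_unif_convex_at_def by simp
  then have "\<delta> \<le> 0" using y(3) by (intro LIMSEQ_le_const) auto
  then show False using \<open>\<delta> > 0\<close> by simp
qed

definition peak_function :: "('a::real_normed_vector \<Rightarrow> complex) \<Rightarrow> 'a \<Rightarrow> complex" where
  "peak_function L = (\<lambda>y. (1/2) * (restr_ball (\<lambda>_. 1) y + restr_ball L y))"

lemma peak_function_eq: "norm y \<le> 1 \<Longrightarrow> peak_function L y = (1 + L y) / 2"
  by (simp add: peak_function_def restr_ball_def)

lemma peak_function_in_A_inf: "L \<in> dual_space sc \<Longrightarrow> peak_function L \<in> A_inf sc"
  unfolding peak_function_def
  by (intro A_inf_cmult A_inf_add restr_ball_const_in_A_inf restr_ball_dual_in_A_inf)

lemma spectrum_peak_function: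
  assumes \<tau>: "\<tau> \<in> spectrum_A_inf sc" and L: "L \<in> dual_space sc"
  shows "\<tau> (peak_function L) = (1 + \<tau> (restr_ball L)) / 2"
proof -
  have one: "restr_ball (\<lambda>_. 1) \<in> A_inf sc" by (rule restr_ball_const_in_A_inf)
  show ?thesis
    unfolding peak_function_def spectrum_cmult[OF \<tau> A_inf_add[OF one restr_ball_dual_in_A_inf[OF L]]]
      spectrum_add[OF \<tau> one restr_ball_dual_in_A_inf[OF L]] spectrum_unit[OF \<tau>]
    by simp
qed

lemma peak_function_uniformly_continuous:
  assumes L: "L \<in> dual_space sc" and L_le: "\<And>y. cmod (L y) \<le> norm y"
  shows "uniformly_continuous_on (ball 0 1) (peak_function L)"
  unfolding uniformly_continuous_on_def
proof (intro allI impI)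
  fix e :: real assume "e > 0"
  have "dist (peak_function L y') (peak_function L y) < e"
    if "y \<in> ball 0 1" "y' \<in> ball 0 1" "dist y' y < e" for y y'
  proof -
    have "L (y' - y) = L y' - L y"
      using L linear_diff bounded_linear.linear unfolding dual_space_def by blast
    then have diff: "peak_function L y' - peak_function L y = L (y' - y) / 2"
      using that by (simp add: peak_function_eq) (simp add: field_simps)
    have "dist (peak_function L y') (peak_function L y) = cmod (L (y' - y)) / 2"
      unfolding dist_norm diff by (simp add: norm_divide)
    also have "\<dots> \<le> norm (y' - y) / 2" using L_le by simp
    also have "\<dots> < e" using that(3) \<open>e > 0\<close> by (simp add: dist_norm)
    finally show ?thesis .
  qed
  then show "\<exists>d>0. \<forall>y\<in>ball 0 1. \<forall>y'\<in>ball 0 1. dist y' y < d \<longrightarrow> dist (peak_function L y') (peak_function L y) < e"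
    using \<open>e > 0\<close> by blast
qed

lemma strong_peak_peak_function:
  assumes x: "norm x = 1" "loc_unif_convex_at x"
    and L: "L \<in> dual_space sc" "L x = 1" and L_le: "\<And>y. cmod (L y) \<le> norm y"
  shows "strong_peak_at (peak_function L) x"
  unfolding strong_peak_at_def
proof (intro conjI allI impI)
  show "peak_function L x = 1" using x L by (simp add: peak_function_eq)
  show "cmod (peak_function L y) \<le> 1" for y
  proof (cases "norm y \<le> 1")
    case True
    then have "cmod (1 + L y) \<le> 2" using L_le[of y] norm_triangle_ineq[of 1 "L y"] by simp
    then show ?thesis using True by (simp add: peak_function_eq norm_divide)
  qed (simp add: peak_function_def restr_ball_def)
  fix \<delta> :: real assume "\<delta> > 0"
  have L_add: "L (u + v) = L u + L v" for u v
    using L(1) unfolding dual_space_def clinear_fun_def by blast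
  obtain \<eta> where "\<eta> > 0" and \<eta>: "\<And>y. norm y \<le> 1 \<Longrightarrow> 2 - \<eta> < cmod (1 + L y) \<Longrightarrow> norm (y - x) < \<delta>"
    using loc_unif_convex_localizes[OF x L_add L(2) L_le \<open>\<delta> > 0\<close>] by blast
  have "norm (y - x) < \<delta>" if "norm y \<le> 1" "1 - \<eta> / 2 < cmod (peak_function L y)" for y
    using that \<eta> by (simp add: peak_function_eq norm_divide)
  then show "\<exists>\<eta>>0. \<forall>y. norm y \<le> 1 \<longrightarrow> 1 - \<eta> < cmod (peak_function L y) \<longrightarrow> norm (y - x) < \<delta>"
    using \<open>\<eta> > 0\<close> by (intro exI[of _ "\<eta> / 2"]) auto
qed

lemma exists_strong_peak_dual:
  assumes sc: "complex_banach sc" and x: "norm x = 1" "loc_unif_convex_at x"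
  obtains L where "L \<in> dual_space sc" "L x = 1" "\<And>y. cmod (L y) \<le> norm y"
    "strong_peak_at (peak_function L) x"
  using exists_norming_dual[OF sc x(1)] strong_peak_peak_function[OF x] by blast

lemma point_eval_in_spectrum:
  assumes "norm x \<le> 1"
  shows "(\<lambda>g. g x) \<in> spectrum_A_inf sc"
  unfolding spectrum_A_inf_def
proof (intro CollectI conjI ballI allI bexI)
  show "restr_ball (\<lambda>_. 1) x \<noteq> 0" using assms by (simp add: restr_ball_def)
qed (simp_all add: restr_ball_const_in_A_inf)

lemma point_eval_in_fiber: "norm x \<le> 1 \<Longrightarrow> (\<lambda>g. g x) \<in> fiber sc x"
  unfolding fiber_def using point_eval_in_spectrum by (simp add: restr_ball_def)

lemma point_eval_in_poly_fiber: "norm x \<le> 1 \<Longrightarrow> (\<lambda>g. g x) \<in> poly_fiber sc x"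
  unfolding poly_fiber_def using point_eval_in_spectrum by simp

lemma fiber_eval:
  assumes sc: "complex_banach sc" and x: "norm x = 1" "loc_unif_convex_at x"
    and \<tau>: "\<tau> \<in> fiber sc x" and f: "f \<in> A_inf sc"
  shows "\<tau> f = f x"
proof -
  obtain L where L: "L \<in> dual_space sc" "L x = 1" and peak: "strong_peak_at (peak_function L) x"
    using exists_strong_peak_dual[OF sc x] by blast
  have \<tau>_spec: "\<tau> \<in> spectrum_A_inf sc" and "\<tau> (restr_ball L) = 1"
    using \<tau> L unfolding fiber_def by auto
  then have "\<tau> (peak_function L) = 1" using spectrum_peak_function[OF \<tau>_spec L(1)] by simp
  then show ?thesis
    using strong_peak_character[OF peak peak_function_in_A_inf[OF L(1)] _ \<tau>_spec _ f] x(1) by simp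
qed

lemma poly_fiber_eval:
  assumes sc: "complex_banach sc" and x: "norm x = 1" "loc_unif_convex_at x"
    and \<tau>: "\<tau> \<in> poly_fiber sc x" and f: "f \<in> A_inf sc"
  shows "\<tau> f = f x"
proof -
  obtain L where L: "L \<in> dual_space sc" "\<And>y. cmod (L y) \<le> norm y"
    and peak: "strong_peak_at (peak_function L) x"
    using exists_strong_peak_dual[OF sc x] by blast
  have \<tau>_spec: "\<tau> \<in> spectrum_A_inf sc" and "\<tau> (peak_function L) = peak_function L x"
    using \<tau> peak_function_in_A_inf[OF L(1)] peak_function_uniformly_continuous[OF L]
    unfolding poly_fiber_def by blast+
  then have "\<tau> (peak_function L) = 1" using peak unfolding strong_peak_at_def by simp
  then show ?thesis
    using strong_peak_character[OF peak peak_function_in_A_inf[OF L(1)] _ \<tau>_spec _ f] x(1) by simp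
qed

lemma cont_multilinear_diagonal_scaleR:
  assumes sc: "complex_banach sc" and A: "cont_multilinear sc k A"
  shows "A (\<lambda>_. r *\<^sub>R y) = complex_of_real r ^ k * A (\<lambda>_. y)"
proof -
  have agree: "\<And>v w. (\<forall>i<k. v i = w i) \<Longrightarrow> A v = A w"
    and lin: "\<And>i v. i < k \<Longrightarrow> clinear_fun sc (\<lambda>y. A (v(i := y)))"
    using A unfolding cont_multilinear_def by blast+
  have "A (\<lambda>i. if i < j then r *\<^sub>R y else y) = complex_of_real r ^ j * A (\<lambda>_. y)" if "j \<le> k" for j
    using that
  proof (induction j)
    case (Suc j)
    define v where "v = (\<lambda>i. if i < j then r *\<^sub>R y else y)"
    have "v(j := sc (complex_of_real r) (v j)) = (\<lambda>i. if i < Suc j then r *\<^sub>R y else y)"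
      by (auto simp: v_def fun_eq_iff sc_of_real[OF sc])
    moreover have "A (v(j := sc (complex_of_real r) (v j))) = complex_of_real r * A (v(j := v j))"
      using lin[of j v] Suc.prems unfolding clinear_fun_def by simp
    moreover have "A v = complex_of_real r ^ j * A (\<lambda>_. y)" using Suc by (simp add: v_def)
    ultimately show ?case by simp
  qed simp
  moreover have "A (\<lambda>_. r *\<^sub>R y) = A (\<lambda>i. if i < k then r *\<^sub>R y else y)" by (rule agree) simp
  ultimately show ?thesis by simp
qed

lemma cont_poly_continuous_on_line:
  assumes sc: "complex_banach sc" and P: "cont_poly sc P"
  shows "continuous_on UNIV (\<lambda>t::real. P (t *\<^sub>R x))"
proof -
  obtain n A where A: "\<And>k. k \<le> n \<Longrightarrow> cont_multilinear sc k (A k)"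
    and P_eq: "\<And>y. P y = (\<Sum>k\<le>n. A k (\<lambda>_. y))"
    using P unfolding cont_poly_def by blast
  have eq: "(\<lambda>t. P (t *\<^sub>R x)) = (\<lambda>t. \<Sum>k\<le>n. complex_of_real t ^ k * A k (\<lambda>_. x))"
    unfolding P_eq by (intro ext sum.cong refl cont_multilinear_diagonal_scaleR[OF sc A]) simp
  show ?thesis unfolding eq by (intro continuous_intros)
qed

lemma dual_cont_poly:
  assumes L: "L \<in> dual_space sc"
  shows "cont_poly sc L"
proof -
  define A where "A = (\<lambda>(k::nat) (v::nat \<Rightarrow> 'a). if k = 0 then 0 else L (v 0))"
  obtain K where K: "\<And>y. norm (L y) \<le> norm y * K"
    using L bounded_linear.bounded unfolding dual_space_def by blast
  have "clinear_fun sc L" using L unfolding dual_space_def by blast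
  then have "cont_multilinear sc k (A k)" if "k \<le> 1" for k
    using that K unfolding cont_multilinear_def A_def
    by (cases k) (auto intro: exI[of _ K] simp: mult.commute)
  moreover have "\<forall>y. L y = (\<Sum>k\<le>1. A k (\<lambda>_. y))" unfolding A_def by simp
  ultimately show ?thesis unfolding cont_poly_def by blast
qed

definition radial_filter :: "'a::real_normed_vector \<Rightarrow> 'a filter" where
  "radial_filter x = filtermap (\<lambda>t. t *\<^sub>R x) (at_left 1)"

lemma radial_filter_neq_bot: "radial_filter x \<noteq> bot"
  by (simp add: radial_filter_def filtermap_bot_iff)

lemma eventually_radial_filter_ball:
  "norm x = 1 \<Longrightarrow> eventually (\<lambda>y. y \<in> ball 0 1) (radial_filter x)"
  unfolding radial_filter_def eventually_filtermap
  using eventually_at_left_real[of 0 1] by (rule eventually_mono) auto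

lemma radial_filter_tendsto_line:
  assumes "continuous_on UNIV (\<lambda>t::real. \<phi> (t *\<^sub>R x))"
  shows "(\<phi> \<longlongrightarrow> \<phi> x) (radial_filter x)"
proof -
  have "isCont (\<lambda>t. \<phi> (t *\<^sub>R x)) 1" using assms by (simp add: continuous_on_eq_continuous_at)
  then have "((\<lambda>t. \<phi> (t *\<^sub>R x)) \<longlongrightarrow> \<phi> x) (at 1)" by (simp add: isCont_def)
  then show ?thesis
    unfolding radial_filter_def filterlim_filtermap by (simp add: filterlim_at_split)
qed

lemma radial_filter_tendsto_continuous_on:
  assumes "continuous_on (cball 0 1) \<phi>" "norm x = 1"
  shows "(\<phi> \<longlongrightarrow> \<phi> x) (radial_filter x)"
proof -
  have "((\<lambda>t. t *\<^sub>R x) \<longlongrightarrow> 1 *\<^sub>R x) (at_left 1)" by (intro tendsto_intros)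
  then have "((\<lambda>t. t *\<^sub>R x) \<longlongrightarrow> x) (at_left 1)" by simp
  moreover have "eventually (\<lambda>t. t *\<^sub>R x \<in> cball 0 1) (at_left 1)"
    using eventually_at_left_real[of 0 1] by (rule eventually_mono) (use assms(2) in auto)
  ultimately show ?thesis
    unfolding radial_filter_def filterlim_filtermap
    using continuous_on_tendsto_compose[OF assms(1)] assms(2) by fastforce
qed

lemma A_inf_tendsto_of_dual_tendsto:
  assumes sc: "complex_banach sc" and x: "norm x = 1" "loc_unif_convex_at x"
    and f: "f \<in> A_inf sc" and F: "eventually (\<lambda>y. y \<in> ball 0 1) F"
    and dual: "\<forall>L\<in>dual_space sc. (L \<longlongrightarrow> L x) F"
  shows "(f \<longlongrightarrow> f x) F"
proof -
  obtain L where L: "L \<in> dual_space sc" "L x = 1" and peak: "strong_peak_at (peak_function L) x"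
    using exists_strong_peak_dual[OF sc x] by blast
  have F_cball: "eventually (\<lambda>y. norm y \<le> 1) F" using F by (rule eventually_mono) simp
  have "((\<lambda>y. (1 + L y) / 2) \<longlongrightarrow> (1 + L x) / 2) F" using dual L(1) by (intro tendsto_intros) auto
  then have "((\<lambda>y. (1 + L y) / 2) \<longlongrightarrow> 1) F" using L(2) by simp
  then have "(peak_function L \<longlongrightarrow> 1) F"
    by (rule Lim_transform_eventually) (use F_cball in \<open>auto elim: eventually_mono simp: peak_function_eq\<close>)
  then have "((\<lambda>y. y) \<longlongrightarrow> x) F" by (rule strong_peak_tendsto[OF peak F_cball])
  then show ?thesis
    using continuous_on_tendsto_compose[OF A_inf_continuous_on[OF f]] F_cball x(1) by fastforce
qed

lemma cluster_set_eq_singleton: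
  assumes sc: "complex_banach sc" and x: "norm x = 1" "loc_unif_convex_at x" and f: "f \<in> A_inf sc"
  shows "cluster_set sc f x = {f x}"
proof (intro equalityI subsetI)
  fix l assume "l \<in> cluster_set sc f x"
  then obtain F where F: "F \<noteq> bot" "eventually (\<lambda>y. y \<in> ball 0 1) F"
    "\<forall>L\<in>dual_space sc. (L \<longlongrightarrow> L x) F" and "(f \<longlongrightarrow> l) F"
    unfolding cluster_set_def by blast
  moreover have "(f \<longlongrightarrow> f x) F" by (rule A_inf_tendsto_of_dual_tendsto[OF sc x f F(2,3)])
  ultimately show "l \<in> {f x}" using tendsto_unique by auto
next
  fix l assume "l \<in> {f x}"
  moreover have "(L \<longlongrightarrow> L x) (radial_filter x)" if "L \<in> dual_space sc" for L
    using that x(1) unfolding dual_space_def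
    by (intro radial_filter_tendsto_continuous_on linear_continuous_on) auto
  ultimately show "l \<in> cluster_set sc f x"
    unfolding cluster_set_def
    using radial_filter_neq_bot eventually_radial_filter_ball[OF x(1)]
      radial_filter_tendsto_continuous_on[OF A_inf_continuous_on[OF f] x(1)] by blast
qed

lemma poly_cluster_set_eq_singleton:
  assumes sc: "complex_banach sc" and x: "norm x = 1" "loc_unif_convex_at x" and f: "f \<in> A_inf sc"
  shows "poly_cluster_set sc f x = {f x}"
proof (intro equalityI subsetI)
  fix l assume "l \<in> poly_cluster_set sc f x"
  then obtain F where F: "F \<noteq> bot" "eventually (\<lambda>y. y \<in> ball 0 1) F"
    "\<forall>P. cont_poly sc P \<longrightarrow> (P \<longlongrightarrow> P x) F" and "(f \<longlongrightarrow> l) F"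
    unfolding poly_cluster_set_def by blast
  moreover have "(f \<longlongrightarrow> f x) F"
    using F(3) dual_cont_poly by (intro A_inf_tendsto_of_dual_tendsto[OF sc x f F(2)]) blast
  ultimately show "l \<in> {f x}" using tendsto_unique by auto
next
  fix l assume "l \<in> {f x}"
  moreover have "(P \<longlongrightarrow> P x) (radial_filter x)" if "cont_poly sc P" for P
    by (rule radial_filter_tendsto_line[OF cont_poly_continuous_on_line[OF sc that]])
  ultimately show "l \<in> poly_cluster_set sc f x"
    unfolding poly_cluster_set_def
    using radial_filter_neq_bot eventually_radial_filter_ball[OF x(1)]
      radial_filter_tendsto_continuous_on[OF A_inf_continuous_on[OF f] x(1)] by blast
qed

lemma gelfand_image_eq_singleton:
  assumes "(\<lambda>g. g x) \<in> S" "\<And>\<tau>. \<tau> \<in> S \<Longrightarrow> \<tau> f = f x"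
  shows "gelfand f ` S = {f x}"
proof -
  have "f x \<in> gelfand f ` S" using image_eqI[OF _ assms(1), of "f x" "gelfand f"] by (simp add: gelfand_def)
  moreover have "gelfand f ` S \<subseteq> {f x}" using assms(2) by (auto simp: gelfand_def)
  ultimately show ?thesis by blast
qed

theorem mainTheorem14:
  fixes sc :: "complex \<Rightarrow> 'a::banach \<Rightarrow> 'a" and x :: 'a
  assumes "complex_banach sc"
    and "norm x = 1"
    and "loc_unif_convex_at x"
  shows "\<forall>f\<in>A_inf sc. cluster_set sc f x = gelfand f ` fiber sc x \<and>
                       poly_cluster_set sc f x = gelfand f ` poly_fiber sc x"
proof
  fix f assume f: "f \<in> A_inf sc"
  have "gelfand f ` fiber sc x = {f x}"
    by (intro gelfand_image_eq_singleton point_eval_in_fiber fiber_eval[OF assms _ f])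
       (simp_all add: assms(2))
  moreover have "gelfand f ` poly_fiber sc x = {f x}"
    by (intro gelfand_image_eq_singleton point_eval_in_poly_fiber poly_fiber_eval[OF assms _ f])
       (simp_all add: assms(2))
  ultimately show "cluster_set sc f x = gelfand f ` fiber sc x \<and>
                   poly_cluster_set sc f x = gelfand f ` poly_fiber sc x"
    using cluster_set_eq_singleton[OF assms f] poly_cluster_set_eq_singleton[OF assms f] by simp
qed

end
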